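(* Let $\{F_b\}$ be a finite POVM on $\mathbb{C}^d$, let $\mathcal{F}$ be the trace-preserving operation $\mathcal{F}(\rho)=\sum_b F_b^{1/2}\rho F_b^{1/2}$, and let $\mathcal{A}(\rho)=\sum_{b,i}A_{bi}\rho A_{bi}^\dagger$ be any operation with $\sum_iA_{bi}^\dagger A_{bi}=F_b$ for each $b$. Then $$F_e(I/d,\mathcal{A})\le F_e(I/d,\mathcal{F}).$$
   Context: A POVM is a finite family of positive semidefinite operators $F_b$ with $\sum_bF_b=I$. For an operation $\mathcal{A}(\rho)=\sum_kA_k\rho A_k^\dagger$ and density operator $\rho$, the entanglement fidelity is $F_e(\rho,\mathcal{A})=\sum_k|\mathrm{tr}(A_k\rho)|^2$. *)

theory Defs
  imports "HOL-Analysis.Analysis"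
begin

(* Operators on C^d are represented as complex d x d matrices, d = CARD('n). *)
type_synonym 'n cmat = "complex ^ 'n ^ 'n"

definition mtrace :: "'n::finite cmat \<Rightarrow> complex" where
  "mtrace A = (\<Sum>i\<in>UNIV. A $ i $ i)"

definition adjoint_mat :: "'n::finite cmat \<Rightarrow> 'n cmat" where
  "adjoint_mat A = (\<chi> i j. cnj (A $ j $ i))"

definition quad_form :: "'n::finite cmat \<Rightarrow> complex ^ 'n \<Rightarrow> complex" where
  "quad_form A v = (\<Sum>i\<in>UNIV. cnj (v $ i) * (A *v v) $ i)"

definition psd :: "'n::finite cmat \<Rightarrow> bool" where
  "psd A \<longleftrightarrow> (\<forall>v. Im (quad_form A v) = 0 \<and> Re (quad_form A v) \<ge> 0)"

definition psd_sqrt :: "'n::finite cmat \<Rightarrow> 'n cmat" where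
  "psd_sqrt F = (THE S. psd S \<and> S ** S = F)"

definition is_povm :: "'b set \<Rightarrow> ('b \<Rightarrow> 'n::finite cmat) \<Rightarrow> bool" where
  "is_povm B F \<longleftrightarrow> finite B \<and> (\<forall>b\<in>B. psd (F b)) \<and> (\<Sum>b\<in>B. F b) = mat 1"

(* entanglement fidelity of the operation with Kraus operators K k, k \<in> S:
   F_e(rho, A) = sum_k |tr(A_k rho)|^2 *)
definition ent_fid :: "'n::finite cmat \<Rightarrow> ('k \<Rightarrow> 'n cmat) \<Rightarrow> 'k set \<Rightarrow> real" where
  "ent_fid \<rho> K S = (\<Sum>k\<in>S. (cmod (mtrace (K k ** \<rho>)))^2)"

definition max_mixed :: "'n::finite cmat" where
  "max_mixed = mat (1 / of_nat CARD('n))"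

end

theory Submission
  imports Defs
begin

text \<open>Both fidelities are \<open>1/d\<^sup>2\<close> times a sum of squared trace moduli, so it suffices to show
  \<open>\<Sum>\<^sub>i |tr A\<^sub>i|\<^sup>2 \<le> (tr F\<^sup>1\<^sup>/\<^sup>2)\<^sup>2\<close> whenever \<open>\<Sum>\<^sub>i A\<^sub>i\<^sup>\<dagger> A\<^sub>i = F\<close>.
  Take an orthonormal eigenbasis \<open>e\<^sub>j\<close> of \<open>F\<close> with eigenvalues \<open>\<lambda>\<^sub>j = \<Sum>\<^sub>i \<parallel>A\<^sub>i e\<^sub>j\<parallel>\<^sup>2\<close>;
  then \<open>tr F\<^sup>1\<^sup>/\<^sup>2 = \<Sum>\<^sub>j \<surd>\<lambda>\<^sub>j\<close>, and writing \<open>tr A\<^sub>i = \<Sum>\<^sub>j \<langle>e\<^sub>j, A\<^sub>i e\<^sub>j\<rangle>\<close>, Minkowski's inequality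
  over \<open>i\<close> followed by Cauchy-Schwarz \<open>|\<langle>e\<^sub>j, A\<^sub>i e\<^sub>j\<rangle>| \<le> \<parallel>A\<^sub>i e\<^sub>j\<parallel>\<close> gives the bound.

  The spectral theorem is obtained by maximising the Rayleigh quotient on the orthogonal
  complement of the eigenvectors found so far. The positive square root is unique because a
  positive semidefinite \<open>T\<close> with \<open>T\<^sup>2 = F\<close> must act as \<open>\<surd>\<lambda>\<close> on every \<open>\<lambda>\<close>-eigenvector of \<open>F\<close>.\<close>

section \<open>Complex inner product\<close>

definition cinner :: "complex ^ 'n::finite \<Rightarrow> complex ^ 'n \<Rightarrow> complex" where
  "cinner x y = (\<Sum>i\<in>UNIV. cnj (x $ i) * y $ i)"

lemma cinner_add_left: "cinner (x + y) z = cinner x z + cinner y z"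
  by (simp add: cinner_def distrib_right sum.distrib)

lemma cinner_add_right: "cinner x (y + z) = cinner x y + cinner x z"
  by (simp add: cinner_def distrib_left sum.distrib)

lemma cinner_diff_right: "cinner x (y - z) = cinner x y - cinner x z"
  by (simp add: cinner_def right_diff_distrib sum_subtractf)

lemma cinner_scale_left: "cinner (c *s x) y = cnj c * cinner x y"
  by (simp add: cinner_def sum_distrib_left mult_ac)

lemma cinner_scale_right: "cinner x (c *s y) = c * cinner x y"
  by (simp add: cinner_def sum_distrib_left mult_ac)

lemma cinner_zero_left [simp]: "cinner 0 x = 0"
  and cinner_zero_right [simp]: "cinner x 0 = 0"
  by (simp_all add: cinner_def)

lemma cinner_sum_right: "cinner x (sum f S) = (\<Sum>s\<in>S. cinner x (f s))"
  by (induction S rule: infinite_finite_induct) (auto simp: cinner_add_right)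

lemma cinner_commute: "cinner y x = cnj (cinner x y)"
  by (simp add: cinner_def mult.commute)

lemma Re_cinner: "Re (cinner x y) = x \<bullet> y"
  by (simp add: cinner_def inner_vec_def inner_complex_def Re_sum)

lemma cinner_self: "cinner x x = of_real ((norm x)\<^sup>2)"
proof -
  have "cinner x x = (\<Sum>i\<in>UNIV. of_real ((cmod (x $ i))\<^sup>2))"
    unfolding cinner_def
    by (intro sum.cong refl) (simp add: complex_norm_square[symmetric] mult.commute)
  also have "\<dots> = of_real ((norm x)\<^sup>2)"
    by (simp add: norm_vec_def L2_set_def sum_nonneg)
  finally show ?thesis .
qed

lemma cinner_self_eq_0 [simp]: "cinner x x = 0 \<longleftrightarrow> x = 0"
  by (simp add: cinner_self)

lemma cinner_self_eq_1_iff: "cinner x x = 1 \<longleftrightarrow> norm x = 1"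
  unfolding cinner_self of_real_eq_1_iff by (smt (verit) norm_ge_zero power2_eq_1_iff)

lemma norm_cinner_le: "cmod (cinner x y) \<le> norm x * norm y"
proof -
  have "cmod (cinner x y) \<le> (\<Sum>i\<in>UNIV. \<bar>cmod (x $ i)\<bar> * \<bar>cmod (y $ i)\<bar>)"
    unfolding cinner_def by (rule order_trans[OF norm_sum]) (simp add: norm_mult)
  also have "\<dots> \<le> norm x * norm y"
    unfolding norm_vec_def by (rule L2_set_mult_ineq)
  finally show ?thesis .
qed

lemma cinner_adjoint_mat: "cinner x (adjoint_mat A *v y) = cinner (A *v x) y"
  by (simp add: cinner_def adjoint_mat_def matrix_vector_mult_def sum_distrib_left
      sum_distrib_right mult_ac) (rule sum.swap)

lemma scaleR_eq_of_real_scalar_mult: "c *\<^sub>R (x :: complex ^ 'n) = complex_of_real c *s x"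
  by (simp add: vec_eq_iff vector_scalar_mult_def) (simp add: scaleR_conv_of_real)

lemma quad_form_eq_cinner: "quad_form A x = cinner x (A *v x)"
  by (simp add: quad_form_def cinner_def)

lemma cinner_quadratic_add:
  "cinner (x + y) (A *v (x + y)) =
     cinner x (A *v x) + cinner y (A *v y) + cinner x (A *v y) + cinner y (A *v x)"
  by (simp add: matrix_vector_right_distrib cinner_add_left cinner_add_right)

lemma sum_mult_vec: "sum A S *v x = (\<Sum>s\<in>S. A s *v (x :: complex ^ 'n::finite))"
  by (induction S rule: infinite_finite_induct) (auto simp: matrix_vector_mult_add_rdistrib)

definition hermitian :: "'n::finite cmat \<Rightarrow> bool" where
  "hermitian A \<longleftrightarrow> (\<forall>x y. cinner x (A *v y) = cinner (A *v x) y)"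

lemma psd_Re_cinner_nonneg: "psd A \<Longrightarrow> 0 \<le> Re (cinner x (A *v x))"
  by (simp add: psd_def quad_form_eq_cinner)

lemma psd_imp_hermitian:
  fixes A :: "'n::finite cmat"
  assumes "psd A"
  shows "hermitian A"
  unfolding hermitian_def
proof (intro allI)
  fix x y :: "complex ^ 'n"
  have Im_0: "Im (cinner z (A *v z)) = 0" for z
    using assms by (simp add: psd_def quad_form_eq_cinner)
  have "Im (cinner x (A *v y) + cinner y (A *v x)) = 0"
    using Im_0[of "x + y"] Im_0[of x] Im_0[of y] by (simp add: cinner_quadratic_add)
  moreover have "Im (cinner x (A *v (\<i> *s y)) + cinner (\<i> *s y) (A *v x)) = 0"
    using Im_0[of "x + \<i> *s y"] Im_0[of x] Im_0[of "\<i> *s y"]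
    by (simp add: cinner_quadratic_add)
  then have "Re (cinner x (A *v y) - cinner y (A *v x)) = 0"
    by (simp add: vector_scalar_commute cinner_scale_right cinner_scale_left)
  ultimately have "cinner x (A *v y) = cnj (cinner y (A *v x))"
    by (simp add: complex_eq_iff)
  then show "cinner x (A *v y) = cinner (A *v x) y"
    by (metis cinner_commute)
qed

lemma hermitian_inner_sym: "hermitian A \<Longrightarrow> x \<bullet> (A *v y) = (A *v x) \<bullet> y"
  by (simp add: hermitian_def flip: Re_cinner)

lemma mult_vec_scaleR: "(A :: 'n::finite cmat) *v (c *\<^sub>R x) = c *\<^sub>R (A *v x)"
  by (simp add: scaleR_eq_of_real_scalar_mult vector_scalar_commute)

lemma quadratic_le_0_imp_coeff_0:
  fixes a b :: real
  assumes "\<And>t. 2 * t * a + t\<^sup>2 * b \<le> 0"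
  shows "a = 0"
proof (rule ccontr)
  assume "a \<noteq> 0"
  define c where "c = \<bar>b\<bar> + 1"
  have "c > 0" by (simp add: c_def)
  have "2 * (a / c) * a + (a / c)\<^sup>2 * b = a\<^sup>2 * (2 * c + b) / c\<^sup>2"
    using \<open>c > 0\<close> by (simp add: field_simps power2_eq_square)
  also have "\<dots> > 0"
    using \<open>a \<noteq> 0\<close> \<open>c > 0\<close> by (intro divide_pos_pos mult_pos_pos) (auto simp: c_def)
  finally show False using assms[of "a / c"] by simp
qed

lemma hermitian_Rayleigh_max_imp_eigenvector:
  fixes F :: "'n::finite cmat"
  assumes "hermitian F" and W: "subspace W" "\<forall>x\<in>W. F *v x \<in> W"
    and v: "v \<in> W" "norm v = 1"
    and max: "\<forall>x\<in>W. x \<bullet> (F *v x) \<le> (v \<bullet> (F *v v)) * (norm x)\<^sup>2"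
  shows "F *v v = (v \<bullet> (F *v v)) *\<^sub>R v"
proof -
  define M where "M = v \<bullet> (F *v v)"
  define u where "u = F *v v - M *\<^sub>R v"
  have "u \<in> W"
    unfolding u_def using W v by (simp add: subspace_diff subspace_scale)
  have sym: "v \<bullet> (F *v u) = u \<bullet> (F *v v)"
    using hermitian_inner_sym[OF \<open>hermitian F\<close>] by (simp add: inner_commute)
  have "2 * t * (u \<bullet> (F *v v) - M * (u \<bullet> v)) + t\<^sup>2 * (u \<bullet> (F *v u) - M * (u \<bullet> u)) \<le> 0"
    for t :: real
  proof -
    have "v + t *\<^sub>R u \<in> W"
      using \<open>u \<in> W\<close> v W by (simp add: subspace_add subspace_scale)
    then have "(v + t *\<^sub>R u) \<bullet> (F *v (v + t *\<^sub>R u)) \<le> M * (norm (v + t *\<^sub>R u))\<^sup>2"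
      using max by (simp add: M_def)
    moreover have "(v + t *\<^sub>R u) \<bullet> (F *v (v + t *\<^sub>R u))
        = M + 2 * t * (u \<bullet> (F *v v)) + t\<^sup>2 * (u \<bullet> (F *v u))"
      by (simp add: matrix_vector_right_distrib mult_vec_scaleR inner_add_left inner_add_right
          sym M_def algebra_simps power2_eq_square)
    moreover have "(norm (v + t *\<^sub>R u))\<^sup>2 = 1 + 2 * t * (u \<bullet> v) + t\<^sup>2 * (u \<bullet> u)"
      using v unfolding power2_norm_eq_inner
      by (simp add: norm_eq_1 inner_add_left inner_add_right inner_commute[of v u]
          algebra_simps power2_eq_square)
    ultimately show ?thesis
      by (simp add: algebra_simps)
  qed
  then have "u \<bullet> (F *v v) - M * (u \<bullet> v) = 0"
    by (rule quadratic_le_0_imp_coeff_0)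
  then have "u \<bullet> u = 0"
    by (simp add: u_def inner_diff_right)
  then show ?thesis
    by (simp add: u_def M_def)
qed

lemma Rayleigh_max_exists:
  fixes F :: "'n::finite cmat"
  assumes "subspace W" "W \<noteq> {0}"
  shows "\<exists>v\<in>W. norm v = 1 \<and> (\<forall>x\<in>W. x \<bullet> (F *v x) \<le> (v \<bullet> (F *v v)) * (norm x)\<^sup>2)"
proof -
  let ?q = "\<lambda>x. x \<bullet> (F *v x)"
  let ?K = "W \<inter> sphere 0 1"
  obtain w where "w \<in> W" "w \<noteq> 0"
    using assms subspace_0 by blast
  then have "(1 / norm w) *\<^sub>R w \<in> ?K"
    using assms(1) by (simp add: subspace_scale)
  moreover have "compact ?K"
    using assms(1) by (intro closed_Int_compact compact_sphere closed_subspace)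
  moreover have "continuous_on ?K ?q"
    by (intro continuous_intros linear_continuous_on linear_conv_bounded_linear
        matrix_vector_mul_linear)
  ultimately obtain v where v: "v \<in> ?K" and v_max: "\<forall>y\<in>?K. ?q y \<le> ?q v"
    using continuous_attains_sup[of ?K ?q] by blast
  have q_scale: "?q (c *\<^sub>R x) = c\<^sup>2 * ?q x" for c x
    by (simp add: mult_vec_scaleR power2_eq_square)
  have "?q x \<le> ?q v * (norm x)\<^sup>2" if "x \<in> W" for x
  proof (cases "x = 0")
    case False
    then have "(1 / norm x) *\<^sub>R x \<in> ?K"
      using that assms(1) by (simp add: subspace_scale)
    then have "(1 / norm x)\<^sup>2 * ?q x \<le> ?q v"
      using v_max q_scale by metis
    then show ?thesis
      using False by (simp add: field_simps)
  qed simp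
  then show ?thesis
    using v by auto
qed

section \<open>Spectral theorem for Hermitian matrices\<close>

definition orthonormal :: "(complex ^ 'n::finite) set \<Rightarrow> bool" where
  "orthonormal E \<longleftrightarrow> (\<forall>e\<in>E. \<forall>f\<in>E. cinner e f = (if e = f then 1 else 0))"

definition cinner_perp :: "(complex ^ 'n::finite) set \<Rightarrow> (complex ^ 'n) set" where
  "cinner_perp E = {x. \<forall>e\<in>E. cinner e x = 0}"

definition orthonormal_basis :: "(complex ^ 'n::finite) set \<Rightarrow> bool" where
  "orthonormal_basis E \<longleftrightarrow> finite E \<and> orthonormal E \<and> (\<forall>x. (\<Sum>e\<in>E. cinner e x *s e) = x)"

lemma subspace_cinner_perp: "subspace (cinner_perp E)"
  by (auto simp: subspace_def cinner_perp_def cinner_add_right cinner_scale_right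
      scaleR_eq_of_real_scalar_mult)

lemma orthonormal_cinner_sum:
  assumes "finite E" "orthonormal E" "f \<in> E"
  shows "cinner f (\<Sum>e\<in>E. c e *s e) = c f"
proof -
  have "(\<Sum>e\<in>E. c e * cinner f e) = (\<Sum>e\<in>E. if e = f then c f else 0)"
    using assms(2,3) by (intro sum.cong) (auto simp: orthonormal_def)
  then show ?thesis
    using assms(1,3) by (simp add: cinner_sum_right cinner_scale_right)
qed

lemma orthonormal_basisI:
  assumes "finite E" "orthonormal E" "cinner_perp E = {0}"
  shows "orthonormal_basis E"
proof -
  have "x - (\<Sum>e\<in>E. cinner e x *s e) \<in> cinner_perp E" for x
    using assms(1,2) by (simp add: cinner_perp_def cinner_diff_right orthonormal_cinner_sum)
  then show ?thesis
    using assms unfolding orthonormal_basis_def by auto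
qed

lemma hermitian_eigenvector_in_invariant_subspace:
  fixes F :: "'n::finite cmat"
  assumes "hermitian F" "subspace W" "\<forall>x\<in>W. F *v x \<in> W" "W \<noteq> {0}"
  obtains v \<mu> where "v \<in> W" "norm v = 1" "F *v v = complex_of_real \<mu> *s v"
  using Rayleigh_max_exists[OF assms(2,4), of F] hermitian_Rayleigh_max_imp_eigenvector[OF assms(1-3)]
  by (metis scaleR_eq_of_real_scalar_mult)

lemma hermitian_cinner_perp_invariant:
  assumes "hermitian F" "\<forall>e\<in>E. \<exists>\<mu>. F *v e = complex_of_real \<mu> *s e" "x \<in> cinner_perp E"
  shows "F *v x \<in> cinner_perp E"
proof -
  have "cinner e (F *v x) = 0" if "e \<in> E" for e
  proof -
    obtain \<mu> where "F *v e = complex_of_real \<mu> *s e"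
      using assms(2) \<open>e \<in> E\<close> by blast
    then have "cinner e (F *v x) = \<mu> * cinner e x"
      using assms(1) by (simp add: hermitian_def cinner_scale_left)
    then show ?thesis
      using assms(3) \<open>e \<in> E\<close> by (simp add: cinner_perp_def)
  qed
  then show ?thesis
    by (simp add: cinner_perp_def)
qed

lemma hermitian_extend_orthonormal_eigenvectors:
  fixes F :: "'n::finite cmat"
  assumes "hermitian F"
  shows "finite E \<Longrightarrow> orthonormal E \<Longrightarrow> \<forall>e\<in>E. \<exists>\<mu>. F *v e = complex_of_real \<mu> *s e \<Longrightarrow>
    \<exists>E'. finite E' \<and> orthonormal E' \<and> (\<forall>e\<in>E'. \<exists>\<mu>. F *v e = complex_of_real \<mu> *s e)
      \<and> cinner_perp E' = {0}"
proof (induction "dim (cinner_perp E)" arbitrary: E rule: less_induct)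
  case less
  show ?case
  proof (cases "cinner_perp E = {0}")
    case False
    obtain v \<mu> where v: "v \<in> cinner_perp E" "norm v = 1" "F *v v = complex_of_real \<mu> *s v"
      using hermitian_eigenvector_in_invariant_subspace[OF assms subspace_cinner_perp _ False]
        hermitian_cinner_perp_invariant[OF assms less.prems(3)] by blast
    have "cinner v v = 1"
      using v(2) by (simp add: cinner_self_eq_1_iff)
    moreover have "cinner e v = 0" "cinner v e = 0" if "e \<in> E" for e
      using v(1) that cinner_commute[of e v] by (auto simp: cinner_perp_def)
    ultimately have orth: "orthonormal (insert v E)"
      using less.prems(2) by (auto simp: orthonormal_def)
    have "v \<notin> cinner_perp (insert v E)"
      using \<open>cinner v v = 1\<close> by (simp add: cinner_perp_def)
    then have "cinner_perp (insert v E) \<subset> cinner_perp E"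
      using v(1) unfolding cinner_perp_def by blast
    then have dim_less: "dim (cinner_perp (insert v E)) < dim (cinner_perp E)"
      by (intro dim_psubset) (metis span_eq_iff subspace_cinner_perp)
    have eig: "\<forall>e\<in>insert v E. \<exists>\<mu>. F *v e = complex_of_real \<mu> *s e"
      using less.prems(3) v(3) by blast
    show ?thesis
      using less.prems(1) by (intro less.hyps[OF dim_less _ orth eig]) simp
  qed (use less.prems in blast)
qed

theorem hermitian_spectral:
  fixes F :: "'n::finite cmat"
  assumes "hermitian F"
  obtains E \<mu> where "orthonormal_basis E" "\<forall>e\<in>E. F *v e = complex_of_real (\<mu> e) *s e"
proof -
  have "orthonormal ({} :: (complex ^ 'n) set)"
    by (simp add: orthonormal_def)
  then obtain E where E: "finite E" "orthonormal E" "cinner_perp E = {0}"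
    and eig: "\<forall>e\<in>E. \<exists>\<mu>. F *v e = complex_of_real \<mu> *s e"
    using hermitian_extend_orthonormal_eigenvectors[OF assms finite.emptyI] by auto
  obtain \<mu> where "\<forall>e\<in>E. F *v e = complex_of_real (\<mu> e) *s e"
    using bchoice[OF eig] by blast
  then show thesis
    using that orthonormal_basisI[OF E] by blast
qed

lemma psd_eigenvalue_nonneg:
  assumes "psd F" "F *v e = complex_of_real \<mu> *s e" "e \<noteq> 0"
  shows "0 \<le> \<mu>"
proof -
  have "0 \<le> Re (cinner e (F *v e))"
    using assms(1) by (rule psd_Re_cinner_nonneg)
  also have "\<dots> = \<mu> * (norm e)\<^sup>2"
    using assms(2) by (simp add: cinner_scale_right cinner_self)
  finally show ?thesis
    using assms(3) by (simp add: zero_le_mult_iff)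
qed

lemma orthonormal_basis_unit:
  "orthonormal_basis E \<Longrightarrow> e \<in> E \<Longrightarrow> cinner e e = 1"
  by (simp add: orthonormal_basis_def orthonormal_def)

lemma orthonormal_basis_nonzero: "orthonormal_basis E \<Longrightarrow> e \<in> E \<Longrightarrow> e \<noteq> 0"
  using orthonormal_basis_unit by fastforce

lemma orthonormal_basis_matrix_eq:
  assumes "orthonormal_basis E" "\<forall>e\<in>E. A *v e = B *v e"
  shows "A = B"
proof -
  have "A *v x = B *v x" for x
  proof -
    have "A *v (\<Sum>e\<in>E. cinner e x *s e) = B *v (\<Sum>e\<in>E. cinner e x *s e)"
      using assms(2) by (simp add: vec.sum vec.scale)
    then show ?thesis
      using assms(1) by (simp add: orthonormal_basis_def)
  qed
  then show ?thesis
    by (simp add: matrix_eq)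
qed

lemma orthonormal_basis_trace:
  assumes "orthonormal_basis E"
  shows "mtrace A = (\<Sum>e\<in>E. cinner e (A *v e))"
proof -
  have "A $ i $ i = (\<Sum>e\<in>E. cnj (e $ i) * (A *v e) $ i)" for i
  proof -
    have "axis i 1 = (\<Sum>e\<in>E. cinner e (axis i 1) *s e)"
      using assms by (simp add: orthonormal_basis_def)
    also have "\<dots> = (\<Sum>e\<in>E. cnj (e $ i) *s e)"
      by (simp add: cinner_def axis_def if_distrib cong: if_cong)
    finally have "axis i 1 = (\<Sum>e\<in>E. cnj (e $ i) *s e)" .
    then have "A *v axis i 1 = (\<Sum>e\<in>E. cnj (e $ i) *s (A *v e))"
      by (simp add: vec.sum vec.scale)
    moreover have "A $ i $ i = (A *v axis i 1) $ i"
      by (simp add: matrix_vector_mult_def axis_def if_distrib cong: if_cong)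
    ultimately show ?thesis
      by (simp only: sum_component vector_scalar_mult_def vec_lambda_beta)
  qed
  then have "mtrace A = (\<Sum>i\<in>UNIV. \<Sum>e\<in>E. cnj (e $ i) * (A *v e) $ i)"
    by (simp add: mtrace_def)
  also have "\<dots> = (\<Sum>e\<in>E. cinner e (A *v e))"
    by (subst sum.swap) (simp add: cinner_def)
  finally show ?thesis .
qed

section \<open>Positive square root\<close>

definition outer_sum :: "(complex ^ 'n::finite) set \<Rightarrow> (complex ^ 'n \<Rightarrow> complex) \<Rightarrow> 'n cmat" where
  "outer_sum E c = (\<chi> j k. \<Sum>e\<in>E. c e * e $ j * cnj (e $ k))"

lemma outer_sum_mult_vec: "outer_sum E c *v x = (\<Sum>e\<in>E. (c e * cinner e x) *s e)"
proof -
  have "(outer_sum E c *v x) $ j = (\<Sum>e\<in>E. (c e * cinner e x) *s e) $ j" for j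
    by (simp add: outer_sum_def matrix_vector_mult_def cinner_def sum_distrib_left
        sum_distrib_right mult_ac) (rule sum.swap)
  then show ?thesis
    by (simp add: vec_eq_iff)
qed

lemma outer_sum_eigenvector:
  assumes "finite E" "orthonormal E" "f \<in> E"
  shows "outer_sum E c *v f = c f *s f"
proof -
  have "(\<Sum>e\<in>E. (c e * cinner e f) *s e) = (\<Sum>e\<in>E. if e = f then c f *s f else 0)"
    using assms(2,3) by (intro sum.cong) (auto simp: orthonormal_def)
  then show ?thesis
    using assms(1,3) by (simp add: outer_sum_mult_vec)
qed

lemma psd_outer_sum:
  assumes "\<forall>e\<in>E. 0 \<le> r e"
  shows "psd (outer_sum E (\<lambda>e. complex_of_real (r e)))"
proof -
  have "quad_form (outer_sum E (\<lambda>e. complex_of_real (r e))) x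
      = complex_of_real (\<Sum>e\<in>E. r e * (cmod (cinner e x))\<^sup>2)" for x
  proof -
    have "quad_form (outer_sum E (\<lambda>e. complex_of_real (r e))) x
        = (\<Sum>e\<in>E. complex_of_real (r e) * (cinner e x * cnj (cinner e x)))"
      by (simp add: quad_form_eq_cinner outer_sum_mult_vec cinner_sum_right cinner_scale_right
          cinner_commute[of x] mult_ac)
    then show ?thesis
      by (simp add: complex_norm_square[symmetric])
  qed
  then show ?thesis
    using assms by (simp add: psd_def sum_nonneg)
qed

lemma psd_square_root_on_eigenvector:
  fixes T :: "'n::finite cmat"
  assumes "psd T" "T ** T = F" "F *v e = complex_of_real \<mu> *s e" "0 \<le> \<mu>"
  shows "T *v e = complex_of_real (sqrt \<mu>) *s e"
proof (cases "\<mu> = 0")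
  case True
  have "cinner (T *v e) (T *v e) = cinner e (T *v (T *v e))"
    using psd_imp_hermitian[OF assms(1)] by (simp add: hermitian_def)
  also have "\<dots> = 0"
    using assms(2,3) True by (simp add: matrix_vector_mul_assoc)
  finally show ?thesis
    using True by simp
next
  case False
  define s where "s = sqrt \<mu>"
  have "s > 0"
    using assms(4) False by (simp add: s_def)
  define u where "u = T *v e - complex_of_real s *s e"
  have "T *v u = T *v (T *v e) - complex_of_real s *s (T *v e)"
    by (simp add: u_def vec.diff vec.scale)
  also have "T *v (T *v e) = complex_of_real s *s (complex_of_real s *s e)"
    using assms(2-4) by (simp add: matrix_vector_mul_assoc s_def vector_smult_assoc
        flip: of_real_mult)
  finally have Tu: "T *v u = complex_of_real (- s) *s u"
    by (simp add: u_def vector_ssub_ldistrib)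
  have "Re (cinner u (T *v u)) = - s * (norm u)\<^sup>2"
    unfolding Tu cinner_scale_right cinner_self by simp
  then have "0 \<le> - s * (norm u)\<^sup>2"
    using psd_Re_cinner_nonneg[OF assms(1), of u] by simp
  then have "u = 0"
    using \<open>s > 0\<close> by (simp add: mult_le_0_iff)
  then show ?thesis
    by (simp add: u_def s_def)
qed

lemma psd_sqrt:
  fixes F :: "'n::finite cmat"
  assumes "psd F"
  shows "psd (psd_sqrt F) \<and> psd_sqrt F ** psd_sqrt F = F"
proof -
  obtain E \<mu> where E: "orthonormal_basis E"
    and eig: "\<forall>e\<in>E. F *v e = complex_of_real (\<mu> e) *s e"
    using hermitian_spectral[OF psd_imp_hermitian[OF assms]] by blast
  have \<mu>_nonneg: "0 \<le> \<mu> e" if "e \<in> E" for e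
    using that eig by (intro psd_eigenvalue_nonneg[OF assms] orthonormal_basis_nonzero[OF E]) auto
  then have root_on_E: "T *v e = complex_of_real (sqrt (\<mu> e)) *s e"
    if "psd T" "T ** T = F" "e \<in> E" for T e
    using psd_square_root_on_eigenvector[OF that(1,2)] eig that(3) by blast
  define S where "S = outer_sum E (\<lambda>e. complex_of_real (sqrt (\<mu> e)))"
  have "psd S"
    unfolding S_def by (rule psd_outer_sum) (simp add: \<mu>_nonneg)
  moreover have "S ** S = F"
  proof (rule orthonormal_basis_matrix_eq[OF E], intro ballI)
    fix e assume "e \<in> E"
    then have "S *v e = complex_of_real (sqrt (\<mu> e)) *s e"
      using E by (simp add: S_def outer_sum_eigenvector orthonormal_basis_def)
    then show "(S ** S) *v e = F *v e"
      using \<open>e \<in> E\<close> \<mu>_nonneg eig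
      by (simp add: vec.scale vector_smult_assoc flip: matrix_vector_mul_assoc of_real_mult)
  qed
  moreover have "T = S" if "psd T" "T ** T = F" for T
    using root_on_E[OF that] root_on_E[OF \<open>psd S\<close> \<open>S ** S = F\<close>]
    by (intro orthonormal_basis_matrix_eq[OF E]) simp
  ultimately have "\<exists>!S. psd S \<and> S ** S = F"
    by blast
  then show ?thesis
    unfolding psd_sqrt_def by (rule theI')
qed

lemma mtrace_psd_sqrt:
  assumes "psd F" "orthonormal_basis E" "\<forall>e\<in>E. F *v e = complex_of_real (\<mu> e) *s e"
  shows "mtrace (psd_sqrt F) = complex_of_real (\<Sum>e\<in>E. sqrt (\<mu> e))"
proof -
  have "psd_sqrt F *v e = complex_of_real (sqrt (\<mu> e)) *s e" if "e \<in> E" for e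
  proof -
    have "0 \<le> \<mu> e"
      using that assms(3)
      by (intro psd_eigenvalue_nonneg[OF assms(1)] orthonormal_basis_nonzero[OF assms(2)]) auto
    then show ?thesis
      using psd_square_root_on_eigenvector psd_sqrt[OF assms(1)] assms(3) that by blast
  qed
  then show ?thesis
    by (simp add: orthonormal_basis_trace[OF assms(2)] cinner_scale_right
        orthonormal_basis_unit[OF assms(2)])
qed

section \<open>The trace bound\<close>

lemma L2_set_sum_le: "L2_set (\<lambda>i. \<Sum>e\<in>E. f i e) I \<le> (\<Sum>e\<in>E. L2_set (\<lambda>i. f i e) I)"
proof (induction E rule: infinite_finite_induct)
  case (insert x E)
  have "L2_set (\<lambda>i. \<Sum>e\<in>insert x E. f i e) I = L2_set (\<lambda>i. f i x + (\<Sum>e\<in>E. f i e)) I"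
    using insert by simp
  also have "\<dots> \<le> L2_set (\<lambda>i. f i x) I + L2_set (\<lambda>i. \<Sum>e\<in>E. f i e) I"
    by (rule L2_set_triangle_ineq)
  also have "\<dots> \<le> L2_set (\<lambda>i. f i x) I + (\<Sum>e\<in>E. L2_set (\<lambda>i. f i e) I)"
    using insert by simp
  finally show ?case
    using insert by simp
qed (simp_all add: L2_set_def)

lemma sum_cmod_trace_sq_le_psd_sqrt:
  fixes F :: "'n::finite cmat" and A :: "'i \<Rightarrow> 'n cmat"
  assumes "psd F" "finite I" "(\<Sum>i\<in>I. adjoint_mat (A i) ** A i) = F"
  shows "(\<Sum>i\<in>I. (cmod (mtrace (A i)))\<^sup>2) \<le> (cmod (mtrace (psd_sqrt F)))\<^sup>2"
proof -
  obtain E \<mu> where E: "orthonormal_basis E"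
    and eig: "\<forall>e\<in>E. F *v e = complex_of_real (\<mu> e) *s e"
    using hermitian_spectral[OF psd_imp_hermitian[OF assms(1)]] by blast
  have unit: "cinner e e = 1" "norm e = 1" if "e \<in> E" for e
    using orthonormal_basis_unit[OF E that] by (auto simp: cinner_self_eq_1_iff)
  have \<mu>_eq: "\<mu> e = (\<Sum>i\<in>I. (norm (A i *v e))\<^sup>2)" if "e \<in> E" for e
  proof -
    have "complex_of_real (\<mu> e) = cinner e (F *v e)"
      using eig unit that by (simp add: cinner_scale_right)
    also have "\<dots> = (\<Sum>i\<in>I. cinner (A i *v e) (A i *v e))"
      by (simp add: assms(3)[symmetric] sum_mult_vec cinner_sum_right cinner_adjoint_mat
          flip: matrix_vector_mul_assoc)
    finally show ?thesis
      by (simp add: cinner_self del: of_real_power flip: of_real_sum)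
  qed
  have \<mu>_nonneg: "0 \<le> \<mu> e" if "e \<in> E" for e
    using \<mu>_eq[OF that] by (simp add: sum_nonneg)
  have trace_sqrt: "cmod (mtrace (psd_sqrt F)) = (\<Sum>e\<in>E. sqrt (\<mu> e))"
    unfolding mtrace_psd_sqrt[OF assms(1) E eig] norm_of_real
    by (intro abs_of_nonneg sum_nonneg) (simp add: \<mu>_nonneg)
  have "L2_set (\<lambda>i. cmod (mtrace (A i))) I
      \<le> L2_set (\<lambda>i. \<Sum>e\<in>E. cmod (cinner e (A i *v e))) I"
    by (rule L2_set_mono) (simp_all add: orthonormal_basis_trace[OF E] norm_sum)
  also have "\<dots> \<le> (\<Sum>e\<in>E. L2_set (\<lambda>i. cmod (cinner e (A i *v e))) I)"
    by (rule L2_set_sum_le)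
  also have "\<dots> \<le> (\<Sum>e\<in>E. L2_set (\<lambda>i. norm (A i *v e)) I)"
    by (intro sum_mono L2_set_mono) (auto intro: order_trans[OF norm_cinner_le] simp: unit)
  also have "\<dots> = cmod (mtrace (psd_sqrt F))"
    by (simp add: trace_sqrt L2_set_def \<mu>_eq)
  finally show ?thesis
    unfolding L2_set_def by (rule sqrt_le_D)
qed

lemma mtrace_mult_max_mixed: "mtrace (A ** (max_mixed :: 'n::finite cmat)) = mtrace A / of_nat CARD('n)"
  by (simp add: mtrace_def max_mixed_def matrix_matrix_mult_def mat_def if_distrib
      sum_divide_distrib cong: if_cong)

lemma ent_fid_max_mixed:
  "ent_fid (max_mixed :: 'n::finite cmat) K S = (\<Sum>k\<in>S. (cmod (mtrace (K k)))\<^sup>2) / (real CARD('n))\<^sup>2"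
  by (simp add: ent_fid_def mtrace_mult_max_mixed norm_divide power_divide sum_divide_distrib)

theorem mainTheorem10:
  fixes B :: "'b set" and F :: "'b \<Rightarrow> 'n::finite cmat"
    and I :: "'b \<Rightarrow> 'i set" and A :: "'b \<Rightarrow> 'i \<Rightarrow> 'n cmat"
  assumes "is_povm B F"
    and "\<And>b. b \<in> B \<Longrightarrow> finite (I b)"
    and "\<And>b. b \<in> B \<Longrightarrow> (\<Sum>i\<in>I b. adjoint_mat (A b i) ** A b i) = F b"
  shows "ent_fid max_mixed (\<lambda>(b, i). A b i) (SIGMA b:B. I b)
           \<le> ent_fid max_mixed (\<lambda>b. psd_sqrt (F b)) B"
proof -
  have "finite B" and psd: "\<And>b. b \<in> B \<Longrightarrow> psd (F b)"
    using assms(1) by (auto simp: is_povm_def)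
  have "(\<Sum>k\<in>(SIGMA b:B. I b). (cmod (mtrace (case k of (b, i) \<Rightarrow> A b i)))\<^sup>2)
      = (\<Sum>b\<in>B. \<Sum>i\<in>I b. (cmod (mtrace (A b i)))\<^sup>2)"
    using \<open>finite B\<close> assms(2) by (simp add: sum.Sigma split_def)
  also have "\<dots> \<le> (\<Sum>b\<in>B. (cmod (mtrace (psd_sqrt (F b))))\<^sup>2)"
    using psd assms(2,3) by (intro sum_mono sum_cmod_trace_sq_le_psd_sqrt)
  finally show ?thesis
    by (simp add: ent_fid_max_mixed divide_right_mono)
qed

end
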